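(* Let $V$ be a finite-dimensional real vector space and $P\subseteq V$ a polytope with $*P=P$. Then in $\mathcal{P}(V)$ \[ \sum_{F\in\mathcal{F}(P),\,F\ne P}(-1)^{\dim F}\cdot F=\begin{cases}0,&\dim P\text{ odd},\\ -2\cdot P,&\dim P\text{ even}.\end{cases}\]
   Context: A polytope in $V$ is the convex hull of a nonempty finite set; $\mathcal{P}(V)$ is the Grothendieck group of the monoid of polytopes in $V$ under Minkowski sum. $*P=\{-p:p\in P\}$. A face of $P$ is a set $F_\phi(P)=\{p\in P:\phi(p)=\max_{q\in P}\phi(q)\}$ for some linear $\phi:V\to\mathbb{R}$; $\mathcal{F}(P)$ is the set of faces of $P$, including $P$ itself. *)

theory Defs
  imports "HOL-Analysis.Analysis"
begin

text \<open>Polytopes: convex hulls of nonempty finite sets. Minkowski sum is the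
  library's pointwise set addition (HOL-Library.Set_Algebras), with neutral element {0}.\<close>

definition ptope :: "'a::euclidean_space set \<Rightarrow> bool" where
  "ptope P \<longleftrightarrow> (\<exists>S. finite S \<and> S \<noteq> {} \<and> P = convex hull S)"

lemma ptope_zero: "ptope ({0} :: 'a::euclidean_space set)"
  unfolding ptope_def by (rule exI[of _ "{0}"]) simp

lemma ex_ptope: "Ex (ptope :: 'a::euclidean_space set \<Rightarrow> bool)"
  using ptope_zero by blast

lemma ptope_plus:
  assumes "ptope A" "ptope B" shows "ptope (A + B)"
proof -
  obtain S T where S: "finite S" "S \<noteq> {}" "A = convex hull S"
    and T: "finite T" "T \<noteq> {}" "B = convex hull T"
    using assms unfolding ptope_def by blast
  have "A + B = convex hull (S + T)" using S T by (simp add: convex_hull_set_plus)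
  moreover have "finite (S + T)" using S T by (simp add: finite_set_plus)
  moreover have "S + T \<noteq> {}" using S T by (auto simp: set_plus_def)
  ultimately show ?thesis unfolding ptope_def by blast
qed

text \<open>The Grothendieck group: pairs (A,B) of polytopes standing for [A]-[B],
  with (A,B) ~ (C,D) iff A+D+K = C+B+K for some polytope K.\<close>

definition grel :: "('a::euclidean_space set \<times> 'a set) \<Rightarrow> ('a set \<times> 'a set) \<Rightarrow> bool" where
  "grel x y \<longleftrightarrow> ptope (fst x) \<and> ptope (snd x) \<and> ptope (fst y) \<and> ptope (snd y) \<and>
     (\<exists>K. ptope K \<and> fst x + snd y + K = fst y + snd x + K)"

lemma grel_part_equivp: "part_equivp (grel :: ('a::euclidean_space set \<times> 'a set) \<Rightarrow> _)"
proof (rule part_equivpI)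
  show "\<exists>x::'a set \<times> 'a set. grel x x"
    by (rule exI[of _ "({0},{0})"]) (auto simp: grel_def ptope_zero ex_ptope)
  show "symp (grel :: ('a set \<times> 'a set) \<Rightarrow> _)"
    unfolding symp_def grel_def by (metis)
  show "transp (grel :: ('a set \<times> 'a set) \<Rightarrow> _)"
  proof (rule transpI)
    fix x y z :: "'a set \<times> 'a set"
    assume xy: "grel x y" and yz: "grel y z"
    obtain K where K: "ptope K" "fst x + snd y + K = fst y + snd x + K"
      using xy unfolding grel_def by blast
    obtain L where L: "ptope L" "fst y + snd z + L = fst z + snd y + L"
      using yz unfolding grel_def by blast
    define M where "M = fst y + snd y + K + L"
    have "ptope M" unfolding M_def
      using xy K L by (simp add: grel_def ptope_plus)
    have "fst x + snd z + M = (fst x + snd y + K) + (fst y + snd z + L)"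
      unfolding M_def by (simp add: ac_simps)
    also have "\<dots> = (fst y + snd x + K) + (fst z + snd y + L)" using K L by simp
    also have "\<dots> = fst z + snd x + M" unfolding M_def by (simp add: ac_simps)
    finally show "grel x z" using xy yz \<open>ptope M\<close> unfolding grel_def by blast
  qed
qed

quotient_type (overloaded) 'a pgroup = "'a::euclidean_space set \<times> 'a set" / partial: grel
  by (rule grel_part_equivp)

instantiation pgroup :: (euclidean_space) ab_group_add
begin

lift_definition zero_pgroup :: "'a pgroup" is "({0}, {0})"
  by (auto simp: grel_def ptope_zero ex_ptope)

lift_definition plus_pgroup :: "'a pgroup \<Rightarrow> 'a pgroup \<Rightarrow> 'a pgroup"
  is "\<lambda>x y. (fst x + fst y, snd x + snd y)"
proof -
  fix x x' y y' :: "'a set \<times> 'a set"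
  assume xx: "grel x x'" and yy: "grel y y'"
  obtain K where K: "ptope K" "fst x + snd x' + K = fst x' + snd x + K"
    using xx unfolding grel_def by blast
  obtain L where L: "ptope L" "fst y + snd y' + L = fst y' + snd y + L"
    using yy unfolding grel_def by blast
  have "(fst x + fst y) + (snd x' + snd y') + (K + L) = (fst x + snd x' + K) + (fst y + snd y' + L)"
    by (simp add: ac_simps)
  also have "\<dots> = (fst x' + snd x + K) + (fst y' + snd y + L)" using K L by simp
  also have "\<dots> = (fst x' + fst y') + (snd x + snd y) + (K + L)" by (simp add: ac_simps)
  finally show "grel (fst x + fst y, snd x + snd y) (fst x' + fst y', snd x' + snd y')"
    using xx yy K L unfolding grel_def by (auto intro!: ptope_plus)
qed

lift_definition uminus_pgroup :: "'a pgroup \<Rightarrow> 'a pgroup" is "\<lambda>x. (snd x, fst x)"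
  unfolding grel_def by (auto simp: ac_simps)

definition minus_pgroup :: "'a pgroup \<Rightarrow> 'a pgroup \<Rightarrow> 'a pgroup" where
  "minus_pgroup a b = a + - b"

instance
proof
  fix a b c :: "'a pgroup"
  show "a + b + c = a + (b + c)"
    by transfer (auto simp: grel_def ptope_plus ac_simps intro!: exI[of _ "{0}"] ptope_zero)
  show "a + b = b + a"
    by transfer (auto simp: grel_def ptope_plus ac_simps intro!: exI[of _ "{0}"] ptope_zero)
  show "0 + a = a"
    by transfer (auto simp: grel_def ptope_plus ac_simps intro!: exI[of _ "{0}"] ptope_zero)
  show "- a + a = 0"
    by transfer (auto simp: grel_def ptope_plus ac_simps ptope_zero)
  show "a - b = a + - b" by (simp add: minus_pgroup_def)
qed

end

lift_definition pclass :: "'a::euclidean_space set \<Rightarrow> 'a pgroup"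
  is "\<lambda>P. if ptope P then (P, {0}) else ({0}, {0})"
  by (auto simp: grel_def ptope_zero intro!: exI[of _ "{0}"])

text \<open>Faces F_phi(P) for linear phi (including P itself, for phi = 0).\<close>

definition faces :: "'a::euclidean_space set \<Rightarrow> 'a set set" where
  "faces P = {F. \<exists>\<phi>::'a \<Rightarrow> real. linear \<phi> \<and> F = {p \<in> P. \<forall>q \<in> P. \<phi> q \<le> \<phi> p}}"

end

theory Submission
  imports Defs
begin

text \<open>Write \<open>P = conv S\<close>. For a linear functional \<open>\<psi>\<close> injective on \<open>S\<close>, every face has a
  \<open>\<psi>\<close>-highest point, and the alternating count of the faces whose \<open>\<psi>\<close>-highest point is \<open>v\<close> is
  \<open>1\<close> if \<open>v\<close> is the \<open>\<psi>\<close>-lowest point of \<open>P\<close> and \<open>0\<close> otherwise; this is proved by induction on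
  the number of points, passing to the vertex figure at \<open>v\<close>. Given any linear \<open>w\<close>, choose such
  a \<open>\<psi>\<close> refining the order of \<open>w\<close> on \<open>S\<close>. The support value \<open>h\<^sub>F(w)\<close> is then the value of
  \<open>w\<close> at the \<open>\<psi>\<close>-highest point of \<open>F\<close>, and grouping the faces by that point gives
  \<open>\<Sum>\<^sub>F (-1)\<^bsup>dim F\<^esup> h\<^sub>F(w) = min\<^sub>P w = - h\<^bsub>*P\<^esub>(w)\<close>.
  Support functions are additive under Minkowski sum and determine polytopes, so the sum of
  the even-dimensional faces plus \<open>*P\<close> equals the sum of the odd-dimensional faces, i.e.
  \<open>\<Sum>\<^sub>F (-1)\<^bsup>dim F\<^esup> [F] = -[*P]\<close>. For \<open>*P = P\<close>, removing the term of \<open>P\<close> itself gives the claim.\<close>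

section \<open>Generic linear functionals\<close>

lemma finite_ex_max:
  fixes f :: "'i \<Rightarrow> 'b::linorder"
  assumes "finite T" "T \<noteq> {}"
  obtains t where "t \<in> T" "\<And>j. j \<in> T \<Longrightarrow> f j \<le> f t"
proof -
  have "Max (f ` T) \<in> f ` T"
    using assms by simp
  then obtain t where "t \<in> T" "f t = Max (f ` T)"
    by auto
  moreover have "f j \<le> Max (f ` T)" if "j \<in> T" for j
    using assms that by simp
  ultimately show ?thesis
    using that by metis
qed

lemma finite_ex_min:
  fixes f :: "'i \<Rightarrow> 'b::linorder"
  assumes "finite T" "T \<noteq> {}"
  obtains t where "t \<in> T" "\<And>j. j \<in> T \<Longrightarrow> f t \<le> f j"
proof -
  have "Min (f ` T) \<in> f ` T"
    using assms by simp
  then obtain t where "t \<in> T" "f t = Min (f ` T)"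
    by auto
  moreover have "Min (f ` T) \<le> f j" if "j \<in> T" for j
    using assms that by simp
  ultimately show ?thesis
    using that by metis
qed

lemma ex_inner_nonzero:
  fixes D :: "'a::euclidean_space set"
  assumes "finite D" "0 \<notin> D"
  shows "\<exists>w. \<forall>d\<in>D. inner w d \<noteq> 0"
  using assms
proof (induction D rule: finite_induct)
  case empty
  then show ?case by simp
next
  case (insert d D)
  then obtain w where w: "\<forall>e\<in>D. inner w e \<noteq> 0" and "d \<noteq> 0"
    by auto
  have "finite ((\<lambda>e. - inner w e / inner d e) ` insert d D)"
    using insert.hyps(1) by simp
  then obtain t :: real where t: "t \<notin> (\<lambda>e. - inner w e / inner d e) ` insert d D"
    using ex_new_if_finite[OF infinite_UNIV_char_0] by blast
  have "inner (w + t *\<^sub>R d) e \<noteq> 0" if e: "e \<in> insert d D" for e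
  proof
    assume "inner (w + t *\<^sub>R d) e = 0"
    then have sum0: "inner w e + t * inner d e = 0"
      by (simp add: inner_add_left)
    show False
    proof (cases "inner d e = 0")
      case True
      then have "e \<in> D"
        using e \<open>d \<noteq> 0\<close> by auto
      then show False
        using True sum0 w by simp
    next
      case False
      then have "t = - inner w e / inner d e"
        using sum0 by (simp add: field_simps)
      then show False
        using t e by auto
    qed
  qed
  then show ?case by blast
qed

lemma ex_perturbation_preserving_less:
  fixes u v :: "'a \<Rightarrow> real"
  assumes "finite X"
  obtains \<epsilon> where "\<epsilon> > 0" "\<And>a b. a \<in> X \<Longrightarrow> b \<in> X \<Longrightarrow> u a < u b \<Longrightarrow> u a + \<epsilon> * v a < u b + \<epsilon> * v b"
proof -
  let ?P = "{(a, b) \<in> X \<times> X. u a < u b}"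
  define S where "S = (\<Sum>(a, b)\<in>?P. \<bar>v a - v b\<bar> / (u b - u a))"
  have "finite ?P"
    by (rule finite_subset[of _ "X \<times> X"]) (use assms in auto)
  have "0 \<le> S"
    unfolding S_def by (rule sum_nonneg) auto
  define \<epsilon> where "\<epsilon> = 1 / (1 + S)"
  have "\<epsilon> > 0"
    unfolding \<epsilon>_def using \<open>0 \<le> S\<close> by simp
  have "u a + \<epsilon> * v a < u b + \<epsilon> * v b" if "a \<in> X" "b \<in> X" "u a < u b" for a b
  proof -
    have "\<bar>v a - v b\<bar> / (u b - u a) \<le> S"
      unfolding S_def
      using member_le_sum[of "(a, b)" ?P "\<lambda>(a, b). \<bar>v a - v b\<bar> / (u b - u a)"]
        that \<open>finite ?P\<close> by auto
    moreover have "\<epsilon> * t < 1" if "t \<le> S" for t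
      using that \<open>0 \<le> S\<close> by (simp add: \<epsilon>_def divide_less_eq)
    ultimately have "\<epsilon> * (\<bar>v a - v b\<bar> / (u b - u a)) < 1"
      by blast
    then have "\<epsilon> * \<bar>v a - v b\<bar> < u b - u a"
      using that(3) by (simp add: field_simps)
    moreover have "\<epsilon> * (v a - v b) \<le> \<epsilon> * \<bar>v a - v b\<bar>"
      using \<open>\<epsilon> > 0\<close> by (intro mult_left_mono) auto
    ultimately show ?thesis
      by (simp add: algebra_simps)
  qed
  then show ?thesis
    using that \<open>\<epsilon> > 0\<close> by blast
qed

lemma ex_linear_injective_refinement:
  fixes X :: "'a::euclidean_space set" and u :: "'a \<Rightarrow> real"
  assumes "finite X" "linear u"
  obtains \<psi> :: "'a \<Rightarrow> real" where "linear \<psi>" "inj_on \<psi> X"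
    "\<And>a b. a \<in> X \<Longrightarrow> b \<in> X \<Longrightarrow> \<psi> a \<le> \<psi> b \<Longrightarrow> u a \<le> u b"
proof -
  let ?D = "(\<lambda>(a, b). a - b) ` {(a, b) \<in> X \<times> X. a \<noteq> b}"
  have "finite ?D"
    by (rule finite_imageI, rule finite_subset[of _ "X \<times> X"]) (use assms(1) in auto)
  moreover have "0 \<notin> ?D"
    by auto
  ultimately obtain w where w: "\<forall>d\<in>?D. inner w d \<noteq> 0"
    using ex_inner_nonzero by blast
  obtain \<epsilon> where "\<epsilon> > 0"
    and order: "\<And>a b. a \<in> X \<Longrightarrow> b \<in> X \<Longrightarrow> u a < u b \<Longrightarrow> u a + \<epsilon> * inner w a < u b + \<epsilon> * inner w b"
    using ex_perturbation_preserving_less[OF assms(1)] by blast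
  define \<psi> where "\<psi> x = u x + \<epsilon> * inner w x" for x
  have "linear \<psi>"
    unfolding \<psi>_def using assms(2)
    by (intro linearI) (auto simp: linear_add linear_scale inner_add_right algebra_simps)
  have "inj_on \<psi> X"
  proof (rule inj_onI, rule ccontr)
    fix a b
    assume ab: "a \<in> X" "b \<in> X" "\<psi> a = \<psi> b" "a \<noteq> b"
    then have "\<not> u a < u b" "\<not> u b < u a"
      using order[of a b] order[of b a] by (auto simp: \<psi>_def)
    then have "u a = u b"
      by linarith
    then have "inner w (a - b) = 0"
      using ab \<open>\<epsilon> > 0\<close> by (simp add: \<psi>_def inner_diff_right)
    moreover have "a - b \<in> ?D"
      using ab by (intro image_eqI[of _ _ "(a, b)"]) auto
    ultimately show False
      using w by blast
  qed
  moreover have "u a \<le> u b" if "a \<in> X" "b \<in> X" "\<psi> a \<le> \<psi> b" for a b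
  proof (rule ccontr)
    assume "\<not> u a \<le> u b"
    then have "\<psi> b < \<psi> a"
      using order[of b a] that(1,2) by (simp add: \<psi>_def)
    then show False
      using that(3) by simp
  qed
  ultimately show ?thesis
    using that \<open>linear \<psi>\<close> by blast
qed

section \<open>Faces of point configurations\<close>

definition maximizers :: "'i set \<Rightarrow> ('i \<Rightarrow> 'a) \<Rightarrow> ('a \<Rightarrow> real) \<Rightarrow> 'i set" where
  "maximizers I p \<phi> = {i \<in> I. \<forall>j\<in>I. \<phi> (p j) \<le> \<phi> (p i)}"

text \<open>The faces of the point configuration \<open>p : I \<rightarrow> V\<close>, recorded by the indices of the points
  they contain. Repeated points are allowed, since vertex figures may identify points.\<close>

definition index_faces :: "'i set \<Rightarrow> ('i \<Rightarrow> 'a::euclidean_space) \<Rightarrow> 'i set set" where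
  "index_faces I p = {T. \<exists>\<phi>::'a \<Rightarrow> real. linear \<phi> \<and> T = maximizers I p \<phi>}"

definition parity_sign :: "int \<Rightarrow> int" where
  "parity_sign k = (if even k then 1 else -1)"

lemma parity_sign_plus_1 [simp]: "parity_sign (k + 1) = - parity_sign k"
  by (simp add: parity_sign_def)

lemma maximizers_eq_level:
  assumes "\<And>i. i \<in> I \<Longrightarrow> \<phi> (p i) \<le> c" "k \<in> I" "\<phi> (p k) = c"
  shows "maximizers I p \<phi> = {i \<in> I. \<phi> (p i) = c}"
  using assms by (auto simp: maximizers_def) (metis order.antisym)

lemma maximizers_nonempty:
  assumes "finite I" "I \<noteq> {}"
  shows "maximizers I p \<phi> \<noteq> {}"
proof -
  obtain i where "i \<in> I" "\<And>j. j \<in> I \<Longrightarrow> \<phi> (p j) \<le> \<phi> (p i)"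
    using finite_ex_max[OF assms, of "\<lambda>i. \<phi> (p i)"] by blast
  then show ?thesis
    by (auto simp: maximizers_def)
qed

lemma index_faces_subset: "T \<in> index_faces I p \<Longrightarrow> T \<subseteq> I"
  by (auto simp: index_faces_def maximizers_def)

lemma finite_index_faces: "finite I \<Longrightarrow> finite (index_faces I p)"
  by (meson Pow_iff finite_Pow_iff finite_subset index_faces_subset subsetI)

lemma index_faces_nonempty: "finite I \<Longrightarrow> I \<noteq> {} \<Longrightarrow> T \<in> index_faces I p \<Longrightarrow> T \<noteq> {}"
  by (auto simp: index_faces_def dest: maximizers_nonempty)

lemma index_face_closed:
  "T \<in> index_faces I p \<Longrightarrow> i \<in> T \<Longrightarrow> j \<in> I \<Longrightarrow> p j = p i \<Longrightarrow> j \<in> T"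
  by (auto simp: index_faces_def maximizers_def)

lemma maximizers_in_index_faces: "linear \<phi> \<Longrightarrow> maximizers I p \<phi> \<in> index_faces I p"
  by (auto simp: index_faces_def)

lemma top_in_index_faces: "I \<in> index_faces I p"
  using maximizers_in_index_faces[of "\<lambda>_. 0" I p] by (simp add: maximizers_def linear_zero)

lemma maximizers_lexicographic:
  assumes "finite I"
  obtains K where "maximizers I p (\<lambda>y. \<psi> y + K * \<phi> y) = maximizers (maximizers I p \<phi>) p \<psi>"
proof (cases "I = {}")
  case True
  then show ?thesis
    using that by (simp add: maximizers_def)
next
  case False
  define T where "T = maximizers I p \<phi>"
  obtain t where t: "t \<in> I" "\<And>j. j \<in> I \<Longrightarrow> \<phi> (p j) \<le> \<phi> (p t)"
    using finite_ex_max[OF assms False, of "\<lambda>i. \<phi> (p i)"] by blast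
  define M where "M = \<phi> (p t)"
  have T: "T = {i \<in> I. \<phi> (p i) = M}"
    unfolding T_def M_def by (rule maximizers_eq_level[where k = t]) (use t in auto)
  have "finite T" "T \<noteq> {}"
    using assms t by (auto simp: T M_def)
  then obtain g where g: "g \<in> T" "\<And>j. j \<in> T \<Longrightarrow> \<psi> (p j) \<le> \<psi> (p g)"
    using finite_ex_max[of T "\<lambda>i. \<psi> (p i)"] by blast
  define m where "m = \<psi> (p g)"
  have G: "maximizers T p \<psi> = {i \<in> T. \<psi> (p i) = m}"
    unfolding m_def by (rule maximizers_eq_level[where k = g]) (use g in auto)
  have below_M: "\<phi> (p i) < M" if "i \<in> I - T" for i
    using t that by (force simp: T M_def)
  define K where "K = (\<Sum>i\<in>I - T. (\<bar>\<psi> (p i)\<bar> + \<bar>m\<bar> + 1) / (M - \<phi> (p i)))"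
  have off_T: "\<psi> (p i) + K * \<phi> (p i) < m + K * M" if i: "i \<in> I - T" for i
  proof -
    have "0 \<le> (\<bar>\<psi> (p j)\<bar> + \<bar>m\<bar> + 1) / (M - \<phi> (p j))" if "j \<in> I - T" for j
      using below_M[OF that] by simp
    then have "(\<bar>\<psi> (p i)\<bar> + \<bar>m\<bar> + 1) / (M - \<phi> (p i)) \<le> K"
      unfolding K_def using assms i by (intro member_le_sum) auto
    then have "\<bar>\<psi> (p i)\<bar> + \<bar>m\<bar> + 1 \<le> K * (M - \<phi> (p i))"
      using below_M[OF i] by (simp add: divide_le_eq)
    then show ?thesis
      by (simp add: algebra_simps)
  qed
  have on_T: "\<psi> (p i) + K * \<phi> (p i) \<le> m + K * M" if "i \<in> T" for i
    using that g by (simp add: T m_def)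
  have "maximizers I p (\<lambda>y. \<psi> y + K * \<phi> y) = {i \<in> I. \<psi> (p i) + K * \<phi> (p i) = m + K * M}"
  proof (rule maximizers_eq_level)
    show "\<psi> (p i) + K * \<phi> (p i) \<le> m + K * M" if "i \<in> I" for i
      using that on_T off_T[of i] by (cases "i \<in> T") auto
    show "g \<in> I" "\<psi> (p g) + K * \<phi> (p g) = m + K * M"
      using g(1) by (simp_all add: T m_def)
  qed
  also have "\<dots> = maximizers T p \<psi>"
  proof -
    have "\<psi> (p i) + K * \<phi> (p i) = m + K * M \<longleftrightarrow> i \<in> T \<and> \<psi> (p i) = m" if "i \<in> I" for i
      using off_T[of i] that by (cases "i \<in> T") (auto simp: T)
    then show ?thesis
      unfolding G by (auto simp: T)
  qed
  finally show ?thesis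
    using that T_def by blast
qed

lemma maximizers_index_face_in_index_faces:
  fixes p :: "'i \<Rightarrow> 'a::euclidean_space"
  assumes "finite I" "T \<in> index_faces I p" "linear \<psi>"
  shows "maximizers T p \<psi> \<in> index_faces I p"
proof -
  obtain \<phi> :: "'a \<Rightarrow> real" where "linear \<phi>" and T: "T = maximizers I p \<phi>"
    using assms(2) by (auto simp: index_faces_def)
  obtain K where "maximizers I p (\<lambda>y. \<psi> y + K * \<phi> y) = maximizers T p \<psi>"
    using maximizers_lexicographic[OF assms(1)] T by blast
  moreover have "linear (\<lambda>y. \<psi> y + K * \<phi> y)"
    using assms(3) \<open>linear \<phi>\<close>
    by (intro linearI) (auto simp: linear_add linear_scale algebra_simps)
  ultimately show ?thesis
    by (metis maximizers_in_index_faces)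
qed

definition lower_star :: "'i set \<Rightarrow> ('i \<Rightarrow> 'a::euclidean_space) \<Rightarrow> ('a \<Rightarrow> real) \<Rightarrow> 'a \<Rightarrow> 'i set set" where
  "lower_star I p \<psi> x = {T \<in> index_faces I p. x \<in> p ` T \<and> (\<forall>i\<in>T. \<psi> (p i) \<le> \<psi> x)}"

section \<open>Vertex figures\<close>

locale vertex_figure =
  fixes I :: "'i set" and p :: "'i \<Rightarrow> 'a::euclidean_space" and x :: 'a and \<eta> :: "'a \<Rightarrow> real"
  assumes finite_I: "finite I" and linear_\<eta>: "linear \<eta>" and x_in: "x \<in> p ` I"
    and exposed: "maximizers I p \<eta> = {i \<in> I. p i = x}"
begin

definition "J = {i \<in> I. p i = x}"

definition "I' = I - J"

text \<open>Projecting the directions \<open>p i - x\<close> from the origin onto the hyperplane \<open>\<eta> = -1\<close>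
  gives the vertex figure of the configuration at its vertex \<open>x\<close>.\<close>

definition "q i = (1 / (\<eta> x - \<eta> (p i))) *\<^sub>R (p i - x)"

lemma J_nonempty: "J \<noteq> {}"
  using x_in by (auto simp: J_def)

lemma J_in_index_faces: "J \<in> index_faces I p"
  using maximizers_in_index_faces[OF linear_\<eta>, of I p] exposed by (simp add: J_def)

lemma I'_iff: "i \<in> I' \<longleftrightarrow> i \<in> I \<and> p i \<noteq> x"
  by (auto simp: I'_def J_def)

lemma eta_less: "i \<in> I' \<Longrightarrow> \<eta> (p i) < \<eta> x"
proof -
  assume i: "i \<in> I'"
  obtain j where j: "j \<in> I" "p j = x"
    using x_in by auto
  then have "\<eta> (p k) \<le> \<eta> x" if "k \<in> I" for k
    using exposed that by (auto simp: maximizers_def set_eq_iff)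
  moreover have "i \<notin> maximizers I p \<eta>"
    using exposed i by (auto simp: I'_iff)
  ultimately show ?thesis
    using i by (force simp: maximizers_def I'_iff not_le)
qed

lemma q_apply:
  fixes \<phi> :: "'a \<Rightarrow> real"
  shows "linear \<phi> \<Longrightarrow> i \<in> I' \<Longrightarrow> \<phi> (q i) = (\<phi> (p i) - \<phi> x) / (\<eta> x - \<eta> (p i))"
  by (simp add: q_def linear_scale linear_diff diff_divide_distrib)

lemma q_neg_iff:
  fixes \<psi> :: "'a \<Rightarrow> real"
  shows "linear \<psi> \<Longrightarrow> i \<in> I' \<Longrightarrow> \<psi> (q i) < 0 \<longleftrightarrow> \<psi> (p i) < \<psi> x"
  using q_apply[of \<psi> i] eta_less[of i] by (simp add: divide_less_0_iff)

lemma eta_q: "i \<in> I' \<Longrightarrow> \<eta> (q i) = -1"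
  using eta_less[of i] by (simp add: q_apply[OF linear_\<eta>] divide_eq_minus_1_iff)

lemma union_J_in_index_faces:
  assumes R: "R \<in> index_faces I' q" and "R \<noteq> {}"
  shows "R \<union> J \<in> index_faces I p"
proof -
  obtain \<psi> :: "'a \<Rightarrow> real" where "linear \<psi>" and R_eq: "R = maximizers I' q \<psi>"
    using R by (auto simp: index_faces_def)
  obtain r where "r \<in> R"
    using \<open>R \<noteq> {}\<close> by blast
  define m where "m = \<psi> (q r)"
  have le_m: "\<psi> (q i) \<le> m" if "i \<in> I'" for i
    using \<open>r \<in> R\<close> that by (auto simp: R_eq maximizers_def m_def)
  have R_iff: "i \<in> R \<longleftrightarrow> i \<in> I' \<and> \<psi> (q i) = m" for i
    using \<open>r \<in> R\<close> le_m by (auto simp: R_eq maximizers_def m_def intro: order.antisym)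
  define \<phi> where "\<phi> y = \<psi> y + m * \<eta> y" for y
  have "linear \<phi>"
    unfolding \<phi>_def using linear_\<eta> \<open>linear \<psi>\<close>
    by (intro linearI) (auto simp: linear_add linear_scale algebra_simps)
  have key: "\<phi> (p i) - \<phi> x = (\<eta> x - \<eta> (p i)) * (\<psi> (q i) - m)" if "i \<in> I'" for i
    using q_apply[OF \<open>linear \<psi>\<close> that] eta_less[OF that]
    by (simp add: \<phi>_def field_simps)
  have le: "\<phi> (p i) \<le> \<phi> x" and eq_iff: "\<phi> (p i) = \<phi> x \<longleftrightarrow> i \<in> R \<union> J" if "i \<in> I" for i
  proof -
    have "\<phi> (p i) \<le> \<phi> x \<and> (\<phi> (p i) = \<phi> x \<longleftrightarrow> i \<in> R \<union> J)"
    proof (cases "i \<in> J")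
      case False
      then have i: "i \<in> I'"
        using that by (simp add: I'_def)
      have "(\<eta> x - \<eta> (p i)) * (\<psi> (q i) - m) \<le> 0"
        using eta_less[OF i] le_m[OF i] by (intro mult_nonneg_nonpos) auto
      moreover have "(\<eta> x - \<eta> (p i)) * (\<psi> (q i) - m) = 0 \<longleftrightarrow> i \<in> R"
        using eta_less[OF i] R_iff[of i] i by auto
      ultimately show ?thesis
        using key[OF i] False by auto
    qed (simp add: J_def)
    then show "\<phi> (p i) \<le> \<phi> x" "\<phi> (p i) = \<phi> x \<longleftrightarrow> i \<in> R \<union> J"
      by blast+
  qed
  obtain j where "j \<in> I" "p j = x"
    using x_in by auto
  then have "maximizers I p \<phi> = {i \<in> I. \<phi> (p i) = \<phi> x}"
    using le by (intro maximizers_eq_level) auto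
  also have "\<dots> = R \<union> J"
    using eq_iff R_iff by (auto simp: I'_def J_def)
  finally show ?thesis
    using maximizers_in_index_faces[OF \<open>linear \<phi>\<close>] by metis
qed

lemma diff_J_in_index_faces:
  assumes T: "T \<in> index_faces I p" and "J \<subseteq> T" and "T - J \<noteq> {}"
  shows "T - J \<in> index_faces I' q"
proof -
  obtain \<phi> :: "'a \<Rightarrow> real" where "linear \<phi>" and T_eq: "T = maximizers I p \<phi>"
    using T by (auto simp: index_faces_def)
  obtain j where "j \<in> J"
    using J_nonempty by blast
  then have "j \<in> T" "p j = x"
    using \<open>J \<subseteq> T\<close> by (auto simp: J_def)
  then have le: "\<phi> (p i) \<le> \<phi> x" if "i \<in> I" for i
    using that by (auto simp: T_eq maximizers_def)
  have T_iff: "i \<in> T \<longleftrightarrow> i \<in> I \<and> \<phi> (p i) = \<phi> x" for i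
    using \<open>j \<in> T\<close> \<open>p j = x\<close> le by (auto simp: T_eq maximizers_def intro: order.antisym)
  have q_le: "\<phi> (q i) \<le> 0" and q_eq_iff: "\<phi> (q i) = 0 \<longleftrightarrow> i \<in> T" if "i \<in> I'" for i
    using q_apply[OF \<open>linear \<phi>\<close> that] eta_less[OF that] le[of i] T_iff[of i] that
    by (auto simp: I'_def divide_le_0_iff)
  obtain r where "r \<in> T - J"
    using \<open>T - J \<noteq> {}\<close> by blast
  then have "r \<in> I'"
    using index_faces_subset[OF T] by (auto simp: I'_def)
  then have "maximizers I' q \<phi> = {i \<in> I'. \<phi> (q i) = 0}"
    using q_le q_eq_iff \<open>r \<in> T - J\<close> by (intro maximizers_eq_level) auto
  also have "\<dots> = T - J"
    using q_eq_iff index_faces_subset[OF T] by (auto simp: I'_def)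
  finally show ?thesis
    using maximizers_in_index_faces[OF \<open>linear \<phi>\<close>] by metis
qed

text \<open>Both dimensions are that of the span of the directions \<open>p i - x\<close>, \<open>i \<in> R\<close>: the points
  \<open>q i\<close> span the same space but lie in a hyperplane avoiding the origin.\<close>

lemma aff_dim_union_J:
  assumes "R \<subseteq> I'"
  shows "aff_dim (p ` (R \<union> J)) = aff_dim (q ` R) + 1"
proof -
  define D where "D = (\<lambda>y. y - x) ` p ` R"
  have "p ` (R \<union> J) = insert x (p ` R)"
    using J_nonempty by (auto simp: J_def)
  moreover have "aff_dim (insert x (p ` R)) = int (dim ((\<lambda>y. y - x) ` insert x (p ` R)))"
    by (rule aff_dim_eq_dim_subtract) (simp add: hull_inc)
  moreover have "(\<lambda>y. y - x) ` insert x (p ` R) = insert 0 D"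
    by (simp add: D_def)
  ultimately have dim_D: "aff_dim (p ` (R \<union> J)) = int (dim D)"
    by (simp add: dim_insert span_zero D_def)
  have "affine hull (q ` R) \<subseteq> {y. \<eta> y = -1}"
  proof (rule hull_minimal)
    show "affine {y. \<eta> y = -1}"
      using linear_\<eta> by (auto simp: affine_def linear_add linear_scale algebra_simps)
  qed (use assms eta_q in auto)
  then have "0 \<notin> affine hull (q ` R)"
    using linear_\<eta> by (auto simp: linear_0)
  then have "aff_dim (q ` R) + 1 = aff_dim (insert 0 (q ` R))"
    by (simp add: aff_dim_insert)
  also have "\<dots> = int (dim (q ` R))"
    by (simp add: aff_dim_zero hull_inc dim_insert span_zero)
  also have "span (q ` R) = span D"
  proof (rule span_eq[THEN iffD2], intro conjI subsetI)
    fix y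
    assume "y \<in> q ` R"
    then obtain i where "i \<in> R" "y = q i"
      by auto
    then show "y \<in> span D"
      by (auto simp: q_def D_def intro: span_mul span_base)
  next
    fix d
    assume "d \<in> D"
    then obtain i where i: "i \<in> R" "d = p i - x"
      by (auto simp: D_def)
    then have "d = (\<eta> x - \<eta> (p i)) *\<^sub>R q i"
      using eta_less[of i] assms by (auto simp: q_def)
    then show "d \<in> span (q ` R)"
      using i by (auto intro: span_mul span_base)
  qed
  then have "dim (q ` R) = dim D"
    by (metis dim_span)
  finally show ?thesis
    using dim_D by simp
qed

lemma lower_star_eq:
  assumes "linear \<psi>" "inj_on \<psi> (p ` I)"
  shows "lower_star I p \<psi> x =
    insert J ((\<lambda>R. R \<union> J) ` {R \<in> index_faces I' q. R \<noteq> {} \<and> (\<forall>i\<in>R. \<psi> (q i) < 0)})"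
    (is "_ = insert J ((\<lambda>R. R \<union> J) ` ?N)")
proof (intro equalityI subsetI)
  fix T
  assume "T \<in> lower_star I p \<psi> x"
  then have T: "T \<in> index_faces I p" and "x \<in> p ` T" and below: "\<forall>i\<in>T. \<psi> (p i) \<le> \<psi> x"
    by (auto simp: lower_star_def)
  have "J \<subseteq> T"
    using index_face_closed[OF T] \<open>x \<in> p ` T\<close> by (auto simp: J_def)
  show "T \<in> insert J ((\<lambda>R. R \<union> J) ` ?N)"
  proof (cases "T - J = {}")
    case False
    have "\<psi> (q i) < 0" if "i \<in> T - J" for i
    proof -
      have "i \<in> I'"
        using that index_faces_subset[OF T] by (auto simp: I'_def)
      then have "\<psi> (p i) \<noteq> \<psi> x"
        using assms(2) x_in by (auto simp: I'_iff dest: inj_onD)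
      then show ?thesis
        using below that q_neg_iff[OF assms(1) \<open>i \<in> I'\<close>] by force
    qed
    then have "T - J \<in> ?N"
      using diff_J_in_index_faces[OF T \<open>J \<subseteq> T\<close> False] False by blast
    moreover have "T = (T - J) \<union> J"
      using \<open>J \<subseteq> T\<close> by blast
    ultimately show ?thesis
      by blast
  qed (use \<open>J \<subseteq> T\<close> in blast)
next
  fix T
  assume "T \<in> insert J ((\<lambda>R. R \<union> J) ` ?N)"
  then consider "T = J" | R where "R \<in> ?N" "T = R \<union> J"
    by blast
  then show "T \<in> lower_star I p \<psi> x"
  proof cases
    case 1
    then show ?thesis
      using J_in_index_faces J_nonempty by (auto simp: lower_star_def J_def)
  next
    case 2
    have "R \<subseteq> I'"
      using \<open>R \<in> ?N\<close> index_faces_subset by blast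
    then have "\<psi> (p i) < \<psi> x" if "i \<in> R" for i
      using that \<open>R \<in> ?N\<close> q_neg_iff[OF assms(1)] by blast
    then show ?thesis
      using 2 union_J_in_index_faces[of R] J_nonempty
      by (fastforce simp: lower_star_def J_def)
  qed
qed

lemma sum_lower_star:
  assumes "linear \<psi>" "inj_on \<psi> (p ` I)"
  shows "(\<Sum>T\<in>lower_star I p \<psi> x. parity_sign (aff_dim (p ` T))) =
    1 - (\<Sum>R\<in>{R \<in> index_faces I' q. R \<noteq> {} \<and> (\<forall>i\<in>R. \<psi> (q i) < 0)}. parity_sign (aff_dim (q ` R)))"
    (is "_ = 1 - sum _ ?N")
proof -
  have disjoint: "R \<inter> J = {}" if "R \<in> ?N" for R
    using that index_faces_subset[of R I' q] by (auto simp: I'_def)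
  have "J \<notin> (\<lambda>R. R \<union> J) ` ?N"
    using disjoint by blast
  moreover have "inj_on (\<lambda>R. R \<union> J) ?N"
    using disjoint by (auto intro!: inj_onI)
  moreover have "finite ?N"
    using finite_index_faces[of I' q] finite_I by (simp add: I'_def)
  moreover have "parity_sign (aff_dim (p ` J)) = 1"
    using J_nonempty by (auto simp: J_def parity_sign_def image_constant_conv)
  moreover have "parity_sign (aff_dim (p ` (R \<union> J))) = - parity_sign (aff_dim (q ` R))"
    if "R \<in> ?N" for R
    using that aff_dim_union_J[of R] index_faces_subset[of R I' q] by simp
  ultimately show ?thesis
    by (simp add: lower_star_eq[OF assms] sum.reindex sum_negf)
qed

end

section \<open>The Euler relation for lower stars\<close>

definition lower_star_euler :: "'i set \<Rightarrow> ('i \<Rightarrow> 'a::euclidean_space) \<Rightarrow> bool" where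
  "lower_star_euler I p \<longleftrightarrow> (\<forall>(\<psi>::'a \<Rightarrow> real) x. linear \<psi> \<longrightarrow> inj_on \<psi> (p ` I) \<longrightarrow> x \<in> p ` I \<longrightarrow>
     (\<Sum>T\<in>lower_star I p \<psi> x. parity_sign (aff_dim (p ` T))) = (if \<forall>i\<in>I. \<psi> x \<le> \<psi> (p i) then 1 else 0))"

lemma index_faces_eq_UN_lower_star:
  assumes "finite I" "I \<noteq> {}" "inj_on \<psi> (p ` I)"
  shows "index_faces I p = (\<Union>x\<in>p ` I. lower_star I p \<psi> x)"
proof (intro equalityI subsetI)
  fix T
  assume T: "T \<in> index_faces I p"
  have "finite T" "T \<noteq> {}"
    using index_faces_subset[OF T] index_faces_nonempty[OF assms(1,2) T] assms(1)
    by (auto intro: finite_subset)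
  then obtain t where "t \<in> T" "\<And>i. i \<in> T \<Longrightarrow> \<psi> (p i) \<le> \<psi> (p t)"
    using finite_ex_max[of T "\<lambda>i. \<psi> (p i)"] by blast
  then show "T \<in> (\<Union>x\<in>p ` I. lower_star I p \<psi> x)"
    using T index_faces_subset[OF T] by (auto simp: lower_star_def)
qed (auto simp: lower_star_def)

lemma lower_star_disjoint:
  assumes "inj_on \<psi> (p ` I)" "x \<noteq> y"
  shows "lower_star I p \<psi> x \<inter> lower_star I p \<psi> y = {}"
proof -
  have False if "T \<in> lower_star I p \<psi> x" "T \<in> lower_star I p \<psi> y" for T
  proof -
    have "x \<in> p ` I" "y \<in> p ` I" "\<psi> x = \<psi> y"
      using that index_faces_subset[of T I p] by (auto simp: lower_star_def intro: order.antisym)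
    then show False
      using assms by (auto dest: inj_onD)
  qed
  then show ?thesis
    by blast
qed

text \<open>Group the faces by their \<open>\<psi>\<close>-highest point and apply the Euler relation for lower stars
  to each group.\<close>

lemma sum_index_faces_by_top_point:
  fixes g :: "'a::euclidean_space \<Rightarrow> 'b::comm_ring_1" and \<psi> :: "'a \<Rightarrow> real"
  assumes "finite I" "lower_star_euler I p" "linear \<psi>" "inj_on \<psi> (p ` I)"
    and weight: "\<And>T x. T \<in> lower_star I p \<psi> x \<Longrightarrow> f T = of_int (parity_sign (aff_dim (p ` T))) * g x"
    and "x0 \<in> p ` I" and lowest: "\<And>i. i \<in> I \<Longrightarrow> \<psi> x0 \<le> \<psi> (p i)"
  shows "(\<Sum>T\<in>index_faces I p. f T) = g x0"
proof -
  have "I \<noteq> {}"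
    using \<open>x0 \<in> p ` I\<close> by blast
  have "(\<Sum>T\<in>index_faces I p. f T) = (\<Sum>x\<in>p ` I. \<Sum>T\<in>lower_star I p \<psi> x. f T)"
    unfolding index_faces_eq_UN_lower_star[OF assms(1) \<open>I \<noteq> {}\<close> assms(4)]
    using assms(1) finite_index_faces[OF assms(1), of p] lower_star_disjoint[OF assms(4)]
    by (intro sum.UNION_disjoint) (auto simp: lower_star_def)
  also have "\<dots> = (\<Sum>x\<in>p ` I. if \<forall>i\<in>I. \<psi> x \<le> \<psi> (p i) then g x else 0)"
  proof (rule sum.cong[OF refl])
    fix x
    assume "x \<in> p ` I"
    have euler: "(\<Sum>T\<in>lower_star I p \<psi> x. parity_sign (aff_dim (p ` T))) =
        (if \<forall>i\<in>I. \<psi> x \<le> \<psi> (p i) then 1 else 0)"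
      using assms(2,3,4) \<open>x \<in> p ` I\<close> by (simp add: lower_star_euler_def)
    have "(\<Sum>T\<in>lower_star I p \<psi> x. f T) =
        of_int (\<Sum>T\<in>lower_star I p \<psi> x. parity_sign (aff_dim (p ` T))) * g x"
      by (simp add: weight sum_distrib_right)
    also have "\<dots> = (if \<forall>i\<in>I. \<psi> x \<le> \<psi> (p i) then g x else 0)"
      unfolding euler by simp
    finally show "(\<Sum>T\<in>lower_star I p \<psi> x. f T) = (if \<forall>i\<in>I. \<psi> x \<le> \<psi> (p i) then g x else 0)" .
  qed
  also have "\<dots> = (\<Sum>x\<in>p ` I. if x = x0 then g x else 0)"
  proof (rule sum.cong[OF refl])
    fix x
    assume "x \<in> p ` I"
    then have "(\<forall>i\<in>I. \<psi> x \<le> \<psi> (p i)) \<longleftrightarrow> x = x0"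
      using lowest \<open>x0 \<in> p ` I\<close> assms(4) by (auto dest: inj_onD intro: order.antisym)
    then show "(if \<forall>i\<in>I. \<psi> x \<le> \<psi> (p i) then g x else 0) = (if x = x0 then g x else 0)"
      by simp
  qed
  also have "\<dots> = g x0"
    using assms(1) \<open>x0 \<in> p ` I\<close> by simp
  finally show ?thesis .
qed

lemma sum_index_faces_below:
  fixes p :: "'i \<Rightarrow> 'a::euclidean_space" and \<psi> :: "'a \<Rightarrow> real"
  assumes "finite I" "lower_star_euler I p" "linear \<psi>" "k \<in> I" "\<psi> (p k) < c"
  shows "(\<Sum>T\<in>{T \<in> index_faces I p. T \<noteq> {} \<and> (\<forall>i\<in>T. \<psi> (p i) < c)}. parity_sign (aff_dim (p ` T))) = 1"
proof -
  obtain \<psi>' :: "'a \<Rightarrow> real" where "linear \<psi>'" "inj_on \<psi>' (p ` I)"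
    and refines: "\<And>a b. a \<in> p ` I \<Longrightarrow> b \<in> p ` I \<Longrightarrow> \<psi>' a \<le> \<psi>' b \<Longrightarrow> \<psi> a \<le> \<psi> b"
    using ex_linear_injective_refinement[of "p ` I" \<psi>] assms(1,3) by blast
  have "I \<noteq> {}"
    using assms(4) by blast
  then obtain l where "l \<in> I" and lowest: "\<And>i. i \<in> I \<Longrightarrow> \<psi>' (p l) \<le> \<psi>' (p i)"
    using finite_ex_min[OF assms(1), of "\<lambda>i. \<psi>' (p i)"] by blast
  have "\<psi> (p l) \<le> \<psi> (p k)"
    using refines lowest \<open>l \<in> I\<close> \<open>k \<in> I\<close> by blast
  then have "\<psi> (p l) < c"
    using assms(5) by linarith
  have "(\<Sum>T\<in>{T \<in> index_faces I p. T \<noteq> {} \<and> (\<forall>i\<in>T. \<psi> (p i) < c)}. parity_sign (aff_dim (p ` T))) =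
      (\<Sum>T\<in>index_faces I p. if T \<noteq> {} \<and> (\<forall>i\<in>T. \<psi> (p i) < c) then parity_sign (aff_dim (p ` T)) else 0)"
    using assms(1) by (intro sum.inter_filter finite_index_faces)
  also have "\<dots> = (if \<psi> (p l) < c then 1 else 0)"
  proof (rule sum_index_faces_by_top_point[OF assms(1,2) \<open>linear \<psi>'\<close> \<open>inj_on \<psi>' (p ` I)\<close> _ _ lowest])
    fix T x
    assume T: "T \<in> lower_star I p \<psi>' x"
    then have "T \<noteq> {}" "T \<subseteq> I" "x \<in> p ` T"
      using index_faces_subset by (auto simp: lower_star_def)
    have le: "\<psi> (p i) \<le> \<psi> x" if "i \<in> T" for i
      using T that refines[of "p i" x] \<open>T \<subseteq> I\<close> \<open>x \<in> p ` T\<close> by (auto simp: lower_star_def)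
    have "(\<forall>i\<in>T. \<psi> (p i) < c) \<longleftrightarrow> \<psi> x < c"
    proof
      assume "\<forall>i\<in>T. \<psi> (p i) < c"
      then show "\<psi> x < c"
        using \<open>x \<in> p ` T\<close> by blast
    next
      assume "\<psi> x < c"
      then show "\<forall>i\<in>T. \<psi> (p i) < c"
        using le by (meson le_less_trans)
    qed
    then show "(if T \<noteq> {} \<and> (\<forall>i\<in>T. \<psi> (p i) < c) then parity_sign (aff_dim (p ` T)) else 0)
        = of_int (parity_sign (aff_dim (p ` T))) * (if \<psi> x < c then 1 else 0)"
      using \<open>T \<noteq> {}\<close> by simp
  qed (use \<open>l \<in> I\<close> in blast)
  finally show ?thesis
    using \<open>\<psi> (p l) < c\<close> by simp
qed

lemma lower_star_trivial_unless_vertex: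
  fixes p :: "'i \<Rightarrow> 'a::euclidean_space" and \<psi> :: "'a \<Rightarrow> real"
  assumes "finite I" "linear \<psi>" "inj_on \<psi> (p ` I)" "x \<in> p ` I"
    and not_vertex: "{i \<in> I. p i = x} \<notin> index_faces I p"
  shows "lower_star I p \<psi> x = {}" and "\<not> (\<forall>i\<in>I. \<psi> x \<le> \<psi> (p i))"
proof -
  have level_eq: "{i \<in> S. \<psi> (p i) = \<psi> x} = {i \<in> S. p i = x}" if "S \<subseteq> I" for S
    using that assms(3,4) by (auto dest: inj_onD)
  show "lower_star I p \<psi> x = {}"
  proof (rule ccontr)
    assume "lower_star I p \<psi> x \<noteq> {}"
    then obtain T t where T: "T \<in> index_faces I p" "\<forall>i\<in>T. \<psi> (p i) \<le> \<psi> x" "t \<in> T" "p t = x"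
      by (auto simp: lower_star_def)
    have "maximizers T p \<psi> = {i \<in> T. \<psi> (p i) = \<psi> x}"
      using T by (intro maximizers_eq_level[where k = t]) auto
    also have "\<dots> = {i \<in> I. p i = x}"
      using level_eq[OF index_faces_subset[OF T(1)]] index_face_closed[OF T(1,3)] T(4)
        index_faces_subset[OF T(1)] by auto
    finally show False
      using maximizers_index_face_in_index_faces[OF assms(1) T(1) assms(2)] not_vertex by simp
  qed
  show "\<not> (\<forall>i\<in>I. \<psi> x \<le> \<psi> (p i))"
  proof
    assume lowest: "\<forall>i\<in>I. \<psi> x \<le> \<psi> (p i)"
    obtain k where "k \<in> I" "p k = x"
      using assms(4) by blast
    then have "maximizers I p (\<lambda>y. - \<psi> y) = {i \<in> I. - \<psi> (p i) = - \<psi> x}"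
      using lowest by (intro maximizers_eq_level) auto
    also have "\<dots> = {i \<in> I. p i = x}"
      using level_eq[of I] by simp
    finally show False
      using maximizers_in_index_faces[OF linear_compose_neg[OF assms(2)]] not_vertex by metis
  qed
qed

context vertex_figure
begin

text \<open>The lower star of \<open>x\<close> consists of \<open>x\<close> and the cones over the faces of the vertex figure
  lying below \<open>x\<close>, and the latter have alternating count \<open>1\<close> exactly when \<open>x\<close> is not lowest.\<close>

lemma sum_lower_star_if_vertex_figure_euler:
  fixes \<psi> :: "'a \<Rightarrow> real"
  assumes "lower_star_euler I' q" "linear \<psi>" "inj_on \<psi> (p ` I)"
  shows "(\<Sum>T\<in>lower_star I p \<psi> x. parity_sign (aff_dim (p ` T))) =
    (if \<forall>i\<in>I. \<psi> x \<le> \<psi> (p i) then 1 else 0)"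
proof -
  have lowest_iff: "(\<forall>i\<in>I. \<psi> x \<le> \<psi> (p i)) \<longleftrightarrow> \<not> (\<exists>i\<in>I'. \<psi> (q i) < 0)"
    using q_neg_iff[OF assms(2)] by (force simp: I'_iff)
  show ?thesis
  proof (cases "\<exists>i\<in>I'. \<psi> (q i) < 0")
    case True
    then obtain i where "i \<in> I'" "\<psi> (q i) < 0"
      by blast
    then show ?thesis
      using sum_lower_star[OF assms(2,3)] lowest_iff True
        sum_index_faces_below[OF _ assms(1,2), of i 0] finite_I
      by (simp add: I'_def)
  next
    case False
    then have no_faces_below: "{R \<in> index_faces I' q. R \<noteq> {} \<and> (\<forall>i\<in>R. \<psi> (q i) < 0)} = {}"
      using index_faces_subset by fastforce
    show ?thesis
      using sum_lower_star[OF assms(2,3)] lowest_iff False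
      unfolding no_faces_below by simp
  qed
qed

end

theorem lower_star_euler_holds:
  fixes p :: "'i \<Rightarrow> 'a::euclidean_space"
  assumes "finite I"
  shows "lower_star_euler I p"
  using assms
proof (induction "card I" arbitrary: I p rule: less_induct)
  case (less I p)
  show ?case
    unfolding lower_star_euler_def
  proof (intro allI impI)
    fix \<psi> :: "'a \<Rightarrow> real" and x
    assume "linear \<psi>" "inj_on \<psi> (p ` I)" "x \<in> p ` I"
    show "(\<Sum>T\<in>lower_star I p \<psi> x. parity_sign (aff_dim (p ` T))) =
        (if \<forall>i\<in>I. \<psi> x \<le> \<psi> (p i) then 1 else 0)"
    proof (cases "{i \<in> I. p i = x} \<in> index_faces I p")
      case False
      then show ?thesis
        using lower_star_trivial_unless_vertex[OF less.prems \<open>linear \<psi>\<close> \<open>inj_on \<psi> (p ` I)\<close> \<open>x \<in> p ` I\<close>]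
        by simp
    next
      case True
      then obtain \<eta> :: "'a \<Rightarrow> real" where "linear \<eta>" "maximizers I p \<eta> = {i \<in> I. p i = x}"
        by (auto simp: index_faces_def)
      then interpret V: vertex_figure I p x \<eta>
        using less.prems \<open>x \<in> p ` I\<close> by (simp add: vertex_figure_def)
      have "card V.I' < card I"
        using less.prems V.J_nonempty by (auto simp: V.I'_def V.J_def intro!: psubset_card_mono)
      then have "lower_star_euler V.I' V.q"
        using less.hyps less.prems by (simp add: V.I'_def)
      then show ?thesis
        using V.sum_lower_star_if_vertex_figure_euler \<open>linear \<psi>\<close> \<open>inj_on \<psi> (p ` I)\<close> by blast
    qed
  qed
qed

lemma sum_index_faces_Max:
  fixes p :: "'i \<Rightarrow> 'a::euclidean_space" and u :: "'a \<Rightarrow> real"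
  assumes "finite I" "I \<noteq> {}" "linear u"
  shows "(\<Sum>T\<in>index_faces I p. of_int (parity_sign (aff_dim (p ` T))) * Max ((\<lambda>i. u (p i)) ` T))
    = Min ((\<lambda>i. u (p i)) ` I)"
proof -
  obtain \<psi> :: "'a \<Rightarrow> real" where "linear \<psi>" "inj_on \<psi> (p ` I)"
    and refines: "\<And>a b. a \<in> p ` I \<Longrightarrow> b \<in> p ` I \<Longrightarrow> \<psi> a \<le> \<psi> b \<Longrightarrow> u a \<le> u b"
    using ex_linear_injective_refinement[of "p ` I" u] assms(1,3) by blast
  obtain l where "l \<in> I" and lowest: "\<And>i. i \<in> I \<Longrightarrow> \<psi> (p l) \<le> \<psi> (p i)"
    using finite_ex_min[OF assms(1,2), of "\<lambda>i. \<psi> (p i)"] by blast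
  have "(\<Sum>T\<in>index_faces I p. of_int (parity_sign (aff_dim (p ` T))) * Max ((\<lambda>i. u (p i)) ` T)) = u (p l)"
  proof (rule sum_index_faces_by_top_point[OF assms(1) lower_star_euler_holds[OF assms(1)]
        \<open>linear \<psi>\<close> \<open>inj_on \<psi> (p ` I)\<close> _ _ lowest])
    fix T x
    assume T: "T \<in> lower_star I p \<psi> x"
    then have "T \<subseteq> I" "x \<in> p ` T"
      using index_faces_subset by (auto simp: lower_star_def)
    have "Max ((\<lambda>i. u (p i)) ` T) = u x"
    proof (rule Max_eqI)
      show "finite ((\<lambda>i. u (p i)) ` T)"
        using \<open>T \<subseteq> I\<close> assms(1) finite_subset by blast
      show "y \<le> u x" if "y \<in> (\<lambda>i. u (p i)) ` T" for y
        using that T refines \<open>T \<subseteq> I\<close> \<open>x \<in> p ` T\<close> by (auto simp: lower_star_def)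
    qed (use \<open>x \<in> p ` T\<close> in auto)
    then show "of_int (parity_sign (aff_dim (p ` T))) * Max ((\<lambda>i. u (p i)) ` T) =
        of_int (parity_sign (aff_dim (p ` T))) * u x"
      by simp
  qed (use \<open>l \<in> I\<close> in blast)
  also have "u (p l) = Min ((\<lambda>i. u (p i)) ` I)"
    using assms(1) \<open>l \<in> I\<close> refines lowest by (intro Min_eqI[symmetric]) auto
  finally show ?thesis .
qed

section \<open>Faces of polytopes and support functions\<close>

lemma linear_functional_eq_inner:
  fixes \<phi> :: "'a::euclidean_space \<Rightarrow> real"
  assumes "linear \<phi>"
  shows "\<phi> = inner (adjoint \<phi> 1)"
  using adjoint_works[OF assms, of _ 1] by (auto simp: inner_commute)

lemma convex_hull_Int_supporting_hyperplane:
  fixes S :: "'a::euclidean_space set"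
  assumes "finite S" "\<And>x. x \<in> S \<Longrightarrow> a \<bullet> x \<le> b"
  shows "convex hull S \<inter> {x. a \<bullet> x = b} = convex hull (S \<inter> {x. a \<bullet> x = b})"
proof -
  define F where "F = convex hull S \<inter> {x. a \<bullet> x = b}"
  have "convex hull S \<subseteq> {x. a \<bullet> x \<le> b}"
    using assms(2) by (intro hull_minimal) (auto simp: convex_halfspace_le)
  then have "F face_of convex hull S"
    unfolding F_def by (intro face_of_Int_supporting_hyperplane_le) auto
  then obtain S' where "S' \<subseteq> S" and F_eq: "F = convex hull S'"
    using face_of_convex_hull_subset finite_imp_compact assms(1) by metis
  then have "S' \<subseteq> S \<inter> {x. a \<bullet> x = b}"
    using hull_subset[of S' convex] by (auto simp: F_eq[symmetric] F_def)
  then have "F \<subseteq> convex hull (S \<inter> {x. a \<bullet> x = b})"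
    unfolding F_eq by (rule hull_mono)
  moreover have "convex hull (S \<inter> {x. a \<bullet> x = b}) \<subseteq> F"
    unfolding F_def using hull_subset[of S convex]
    by (intro hull_minimal convex_Int convex_convex_hull convex_hyperplane) auto
  ultimately show ?thesis
    unfolding F_def by (rule subset_antisym)
qed

lemma convex_hull_maximizers:
  fixes S :: "'a::euclidean_space set" and \<phi> :: "'a \<Rightarrow> real"
  assumes "finite S" "S \<noteq> {}" "linear \<phi>"
  shows "{y \<in> convex hull S. \<forall>z\<in>convex hull S. \<phi> z \<le> \<phi> y} = convex hull (maximizers S id \<phi>)"
    and "S \<inter> convex hull (maximizers S id \<phi>) = maximizers S id \<phi>"
proof -
  define a where "a = adjoint \<phi> 1"
  have \<phi>: "\<phi> = inner a"
    unfolding a_def by (rule linear_functional_eq_inner[OF assms(3)])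
  obtain s where "s \<in> S" and s_max: "\<And>t. t \<in> S \<Longrightarrow> a \<bullet> t \<le> a \<bullet> s"
    using finite_ex_max[OF assms(1,2), of \<phi>] by (auto simp: \<phi>)
  define M where "M = a \<bullet> s"
  have T: "maximizers S id \<phi> = S \<inter> {x. a \<bullet> x = M}"
    unfolding M_def using \<open>s \<in> S\<close> s_max
    by (subst maximizers_eq_level[where k = s]) (auto simp: \<phi>)
  have hull_le: "convex hull S \<subseteq> {x. a \<bullet> x \<le> M}"
    using s_max by (intro hull_minimal) (auto simp: M_def convex_halfspace_le)
  have hull_T: "convex hull (maximizers S id \<phi>) = convex hull S \<inter> {x. a \<bullet> x = M}"
    unfolding T using assms(1) s_max by (intro convex_hull_Int_supporting_hyperplane[symmetric]) (auto simp: M_def)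
  show "{y \<in> convex hull S. \<forall>z\<in>convex hull S. \<phi> z \<le> \<phi> y} = convex hull (maximizers S id \<phi>)"
    unfolding hull_T
  proof (intro equalityI subsetI)
    fix y
    assume y: "y \<in> {y \<in> convex hull S. \<forall>z\<in>convex hull S. \<phi> z \<le> \<phi> y}"
    then have "M \<le> a \<bullet> y"
      using hull_subset[of S convex] \<open>s \<in> S\<close> by (auto simp: M_def \<phi>)
    moreover have "a \<bullet> y \<le> M"
      using y hull_le by auto
    ultimately show "y \<in> convex hull S \<inter> {x. a \<bullet> x = M}"
      using y by simp
  next
    fix y
    assume "y \<in> convex hull S \<inter> {x. a \<bullet> x = M}"
    then show "y \<in> {y \<in> convex hull S. \<forall>z\<in>convex hull S. \<phi> z \<le> \<phi> y}"
      using hull_le by (auto simp: \<phi>)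
  qed
  show "S \<inter> convex hull (maximizers S id \<phi>) = maximizers S id \<phi>"
    unfolding hull_T using hull_subset[of S convex] by (auto simp: T)
qed

lemma faces_convex_hull:
  fixes S :: "'a::euclidean_space set"
  assumes "finite S" "S \<noteq> {}"
  shows "faces (convex hull S) = (\<lambda>T. convex hull T) ` index_faces S id"
    and "inj_on (\<lambda>T. convex hull T) (index_faces S id)"
proof -
  show "faces (convex hull S) = (\<lambda>T. convex hull T) ` index_faces S id"
    using convex_hull_maximizers(1)[OF assms] by (auto simp: faces_def index_faces_def)
  show "inj_on (\<lambda>T. convex hull T) (index_faces S id)"
  proof (rule inj_onI)
    fix T1 T2
    assume "T1 \<in> index_faces S id" "T2 \<in> index_faces S id" "convex hull T1 = convex hull T2"
    then have "T1 = S \<inter> convex hull T1" "T2 = S \<inter> convex hull T2"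
      using convex_hull_maximizers(2)[OF assms] by (auto simp: index_faces_def)
    then show "T1 = T2"
      using \<open>convex hull T1 = convex hull T2\<close> by simp
  qed
qed

definition support_fun :: "'a::real_inner set \<Rightarrow> 'a \<Rightarrow> real" where
  "support_fun G w = Max ((\<lambda>x. inner w x) ` G)"

lemma support_fun_plus:
  assumes "finite G" "G \<noteq> {}" "finite H" "H \<noteq> {}"
  shows "support_fun (G + H) w = support_fun G w + support_fun H w"
proof -
  obtain a where "a \<in> G" and a: "\<And>x. x \<in> G \<Longrightarrow> inner w x \<le> inner w a"
    using finite_ex_max[OF assms(1,2), of "inner w"] by blast
  obtain b where "b \<in> H" and b: "\<And>x. x \<in> H \<Longrightarrow> inner w x \<le> inner w b"
    using finite_ex_max[OF assms(3,4), of "inner w"] by blast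
  have "support_fun G w = inner w a" "support_fun H w = inner w b"
    unfolding support_fun_def using assms \<open>a \<in> G\<close> a \<open>b \<in> H\<close> b by (auto intro!: Max_eqI)
  moreover have "support_fun (G + H) w = inner w (a + b)"
    unfolding support_fun_def
  proof (rule Max_eqI)
    show "finite ((\<lambda>x. inner w x) ` (G + H))"
      using assms by (simp add: finite_set_plus)
    show "inner w (a + b) \<in> (\<lambda>x. inner w x) ` (G + H)"
      using \<open>a \<in> G\<close> \<open>b \<in> H\<close> by (auto simp: set_plus_def)
  next
    fix y
    assume "y \<in> (\<lambda>x. inner w x) ` (G + H)"
    then obtain g h where "g \<in> G" "h \<in> H" "y = inner w (g + h)"
      by (auto simp: set_plus_def)
    then show "y \<le> inner w (a + b)"
      using a b by (simp add: inner_add_right add_mono)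
  qed
  ultimately show ?thesis
    by (simp add: inner_add_right)
qed

lemma support_fun_sum:
  fixes G :: "'b \<Rightarrow> 'a::real_inner set"
  assumes "finite E" "\<And>T. T \<in> E \<Longrightarrow> finite (G T) \<and> G T \<noteq> {}"
  shows "finite (sum G E) \<and> sum G E \<noteq> {} \<and> support_fun (sum G E) w = (\<Sum>T\<in>E. support_fun (G T) w)"
  using assms
proof (induction E rule: finite_induct)
  case empty
  then show ?case
    by (simp add: support_fun_def)
next
  case (insert T E)
  then have "finite (G T)" "G T \<noteq> {}" "finite (sum G E)" "sum G E \<noteq> {}"
    and IH: "support_fun (sum G E) w = (\<Sum>T\<in>E. support_fun (G T) w)"
    by auto
  moreover have "G T + sum G E \<noteq> {}"
    using calculation by (auto simp: set_plus_def)
  ultimately show ?case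
    using insert.hyps by (simp add: finite_set_plus support_fun_plus IH)
qed

lemma support_fun_uminus:
  assumes "finite S" "S \<noteq> {}"
  shows "support_fun (uminus ` S) w = - Min ((\<lambda>x. inner w x) ` S)"
proof -
  have "(\<lambda>x. inner w x) ` uminus ` S = uminus ` (\<lambda>x. inner w x) ` S"
    by (auto simp: image_image)
  then show ?thesis
    using assms by (simp add: support_fun_def)
qed

lemma convex_hull_subset_if_support_fun_le:
  fixes G H :: "'a::euclidean_space set"
  assumes "finite G" "finite H" "H \<noteq> {}" "\<And>w. support_fun G w \<le> support_fun H w"
  shows "convex hull G \<subseteq> convex hull H"
proof
  fix y
  assume y: "y \<in> convex hull G"
  show "y \<in> convex hull H"
  proof (rule ccontr)
    assume "y \<notin> convex hull H"
    moreover have "closed (convex hull H)"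
      using assms(2) by (simp add: compact_imp_closed finite_imp_compact_convex_hull)
    ultimately obtain a b where "inner a y < b" and ab: "\<forall>x\<in>convex hull H. b < inner a x"
      using separating_hyperplane_closed_point[of "convex hull H" y] by auto
    have "\<forall>x\<in>H. inner (- a) x < - b"
      using ab hull_subset[of H convex] by auto
    then have "support_fun H (- a) < - b"
      unfolding support_fun_def using assms(2,3) by simp
    moreover have "convex hull G \<subseteq> {z. inner (- a) z \<le> support_fun G (- a)}"
    proof (rule hull_minimal)
      show "G \<subseteq> {z. inner (- a) z \<le> support_fun G (- a)}"
        unfolding support_fun_def using assms(1) by auto
    qed (rule convex_halfspace_le)
    ultimately show False
      using y \<open>inner a y < b\<close> assms(4)[of "- a"] by force
  qed
qed

section \<open>The Euler relation in the polytope group\<close>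

lemma pclass_plus: "ptope X \<Longrightarrow> ptope Y \<Longrightarrow> pclass (X + Y) = pclass X + pclass Y"
  by transfer (auto simp: grel_def ptope_plus ptope_zero intro!: exI[of _ "{0}"])

lemma pclass_zero: "pclass ({0}::'a::euclidean_space set) = 0"
  by transfer (auto simp: grel_def ptope_zero intro!: exI[of _ "{0}"])

lemma ptope_convex_hull: "finite T \<Longrightarrow> T \<noteq> {} \<Longrightarrow> ptope (convex hull T)"
  unfolding ptope_def by blast

lemma pclass_sum:
  fixes P :: "'b \<Rightarrow> 'a::euclidean_space set"
  assumes "finite E" "\<And>T. T \<in> E \<Longrightarrow> ptope (P T)"
  shows "ptope (sum P E) \<and> pclass (sum P E) = (\<Sum>T\<in>E. pclass (P T))"
  using assms by (induction E rule: finite_induct) (auto simp: ptope_zero pclass_zero ptope_plus pclass_plus)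

lemma sum_if_minus_split:
  fixes f :: "'b \<Rightarrow> 'c::ab_group_add"
  assumes "finite A"
  shows "(\<Sum>x\<in>A. if P x then f x else - f x) = sum f {x \<in> A. P x} - sum f {x \<in> A. \<not> P x}"
  using assms by (simp add: sum.If_cases sum_negf Int_def conj_commute)

lemma alternating_minkowski_identity:
  fixes S :: "'a::euclidean_space set"
  assumes "finite S" "S \<noteq> {}"
  shows "(\<Sum>T\<in>{T \<in> index_faces S id. even (aff_dim T)}. convex hull T) + uminus ` (convex hull S) =
    (\<Sum>T\<in>{T \<in> index_faces S id. odd (aff_dim T)}. convex hull T)"
proof -
  define Ev where "Ev = {T \<in> index_faces S id. even (aff_dim T)}"
  define Od where "Od = {T \<in> index_faces S id. odd (aff_dim T)}"
  have face: "finite T \<and> T \<noteq> {}" if "T \<in> index_faces S id" for T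
    using that index_faces_subset index_faces_nonempty[OF assms] assms(1) finite_subset by metis
  have "finite Ev" "finite Od"
    using finite_index_faces[OF assms(1), of id] by (simp_all add: Ev_def Od_def)
  define A where "A = (\<Sum>T\<in>Ev. T)"
  define B where "B = (\<Sum>T\<in>Od. T)"
  have A: "finite A" "A \<noteq> {}" "support_fun A w = (\<Sum>T\<in>Ev. support_fun T w)" for w
    unfolding A_def using support_fun_sum[OF \<open>finite Ev\<close>, of "\<lambda>T. T"] face by (auto simp: Ev_def)
  have B: "finite B" "B \<noteq> {}" "support_fun B w = (\<Sum>T\<in>Od. support_fun T w)" for w
    unfolding B_def using support_fun_sum[OF \<open>finite Od\<close>, of "\<lambda>T. T"] face by (auto simp: Od_def)
  have AS: "finite (A + uminus ` S)" "A + uminus ` S \<noteq> {}"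
    using A assms by (auto simp: finite_set_plus set_plus_def)
  have support_eq: "support_fun (A + uminus ` S) w = support_fun B w" for w
  proof -
    have "linear (inner w)"
      by (rule bounded_linear.linear[OF bounded_linear_inner_right])
    then have "(\<Sum>T\<in>index_faces S id. of_int (parity_sign (aff_dim T)) * Max ((\<lambda>x. inner w x) ` T))
        = Min ((\<lambda>x. inner w x) ` S)"
      using sum_index_faces_Max[OF assms, of "inner w" id] by simp
    moreover have "(\<Sum>T\<in>index_faces S id. of_int (parity_sign (aff_dim T)) * Max ((\<lambda>x. inner w x) ` T))
        = (\<Sum>T\<in>index_faces S id. if even (aff_dim T) then support_fun T w else - support_fun T w)"
      by (intro sum.cong) (simp_all add: parity_sign_def support_fun_def)
    moreover have "\<dots> = (\<Sum>T\<in>Ev. support_fun T w) - (\<Sum>T\<in>Od. support_fun T w)"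
      using finite_index_faces[OF assms(1), of id] by (simp add: sum_if_minus_split Ev_def Od_def)
    moreover have "support_fun (A + uminus ` S) w = support_fun A w + support_fun (uminus ` S) w"
      using A(1,2) assms by (intro support_fun_plus) auto
    ultimately show ?thesis
      using support_fun_uminus[OF assms, of w] A(3)[of w] B(3)[of w] by linarith
  qed
  have "convex hull (A + uminus ` S) = convex hull B"
    using AS B support_eq
    by (intro subset_antisym convex_hull_subset_if_support_fun_le) auto
  then show ?thesis
    by (simp add: A_def B_def Ev_def Od_def convex_hull_set_sum convex_hull_set_plus
        convex_hull_linear_image[OF linear_uminus])
qed

theorem euler_relation_pclass:
  fixes P :: "'a::euclidean_space set"
  assumes "ptope P"
  shows "(\<Sum>F\<in>faces P. if even (aff_dim F) then pclass F else - pclass F) = - pclass (uminus ` P)"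
proof -
  obtain S where S: "finite S" "S \<noteq> {}" "P = convex hull S"
    using assms by (auto simp: ptope_def)
  define Ev where "Ev = {T \<in> index_faces S id. even (aff_dim T)}"
  define Od where "Od = {T \<in> index_faces S id. odd (aff_dim T)}"
  have finite_faces: "finite (index_faces S id)"
    using finite_index_faces[OF S(1)] .
  have ptope_face: "ptope (convex hull T)" if "T \<in> index_faces S id" for T
    using that index_faces_subset index_faces_nonempty[OF S(1,2)] S(1) finite_subset
    by (metis ptope_convex_hull)
  have Ev: "ptope (\<Sum>T\<in>Ev. convex hull T) \<and> pclass (\<Sum>T\<in>Ev. convex hull T) = (\<Sum>T\<in>Ev. pclass (convex hull T))"
    using finite_faces ptope_face by (intro pclass_sum) (auto simp: Ev_def)
  have Od: "pclass (\<Sum>T\<in>Od. convex hull T) = (\<Sum>T\<in>Od. pclass (convex hull T))"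
    using finite_faces ptope_face pclass_sum[of Od "\<lambda>T. convex hull T"] by (auto simp: Od_def)
  have "uminus ` P = convex hull (uminus ` S)"
    using S(3) convex_hull_linear_image[OF linear_uminus] by metis
  then have "ptope (uminus ` P)"
    using S(1,2) by (simp add: ptope_convex_hull)
  then have Od_Ev: "pclass (\<Sum>T\<in>Od. convex hull T) = pclass (\<Sum>T\<in>Ev. convex hull T) + pclass (uminus ` P)"
    using alternating_minkowski_identity[OF S(1,2)] Ev pclass_plus
    by (metis S(3) Ev_def Od_def)
  have "(\<Sum>F\<in>faces P. if even (aff_dim F) then pclass F else - pclass F) =
      (\<Sum>T\<in>index_faces S id. if even (aff_dim T) then pclass (convex hull T) else - pclass (convex hull T))"
    unfolding S(3) faces_convex_hull(1)[OF S(1,2)]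
    by (simp add: sum.reindex[OF faces_convex_hull(2)[OF S(1,2)]] aff_dim_convex_hull)
  also have "\<dots> = pclass (\<Sum>T\<in>Ev. convex hull T) - pclass (\<Sum>T\<in>Od. convex hull T)"
    using finite_faces Ev Od by (simp add: sum_if_minus_split Ev_def Od_def)
  finally show ?thesis
    by (simp add: Od_Ev)
qed

theorem corollary5p3:
  fixes P :: "'a::euclidean_space set"
  assumes "ptope P" and "uminus ` P = P"
  shows "(\<Sum>F \<in> faces P - {P}. (if even (aff_dim F) then pclass F else - pclass F))
           = (if odd (aff_dim P) then 0 else - (pclass P + pclass P))"
proof -
  obtain S where S: "finite S" "S \<noteq> {}" "P = convex hull S"
    using assms(1) by (auto simp: ptope_def)
  have "finite (faces P)"
    using finite_index_faces[OF S(1), of id] by (simp add: S(3) faces_convex_hull(1)[OF S(1,2)])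
  moreover have "P \<in> faces P"
    using top_in_index_faces[of S id] by (simp add: S(3) faces_convex_hull(1)[OF S(1,2)])
  ultimately have "(\<Sum>F \<in> faces P - {P}. if even (aff_dim F) then pclass F else - pclass F) =
      - pclass P - (if even (aff_dim P) then pclass P else - pclass P)"
    using euler_relation_pclass[OF assms(1)] assms(2) by (simp add: sum_diff1)
  then show ?thesis
    by auto
qed

end
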